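(* Let $\Phi_o$ be a $\mathrm{Spin}(7)$-structure on an oriented $8$-manifold with metric $g_o$, let $v,w$ be vector fields, and let $\sigma_7 = v^\flat\wedge(w\lrcorner\Phi_o) - w^\flat\wedge(v\lrcorner\Phi_o)$, $\tilde\Phi = \Phi_o + \sigma_7$. Then \[ \tilde\Phi\wedge\tilde\Phi = \left(1+\tfrac47|v\wedge w|_o^2\right)\Phi_o\wedge\Phi_o . \]
   Context: A $\mathrm{Spin}(7)$-structure on an oriented $8$-manifold $M$ is a $4$-form $\Phi$ such that at each point $p$ there are local coordinates $x^0,\dots,x^7$ with $\Phi_p = dx^{0123} - dx^{0167} - dx^{0527} - dx^{0563} + dx^{0415} + dx^{0426} + dx^{0437} + dx^{4567} - dx^{4523} - dx^{4163} - dx^{4127} + dx^{2637} + dx^{1537} + dx^{1526}$. It determines a Riemannian metric (equal to $\sum_k dx^k\otimes dx^k$ at $p$), orientation, volume form and Hodge star; $\Phi\wedge\Phi=14\,\mathrm{vol}$. $v^\flat=g_o(v,\cdot)$, and $|v\wedge w|_o^2 = |v|_o^2|w|_o^2 - g_o(v,w)^2$. *)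

theory Defs
  imports Complex_Main
begin

text \<open>Pointwise exterior algebra of R^8 with orthonormal coordinates x^0,...,x^7.
  A form is represented by its coefficient function on index sets:
  alpha K is the coefficient of dx^K, where dx^K = dx^{k1} ^ ... ^ dx^{kr}
  for K = {k1 < ... < kr} a subset of {0..7}. Vectors are v :: nat => real,
  with components v 0, ..., v 7 (other values are never used).\<close>

type_synonym form = "nat set \<Rightarrow> real"

definition dim8 :: "nat set" where "dim8 = {0..<8}"

definition wedge_sign :: "nat set \<Rightarrow> nat set \<Rightarrow> real" where
  "wedge_sign I J = (-1) ^ card {(i,j). i \<in> I \<and> j \<in> J \<and> j < i}"

definition wedge :: "form \<Rightarrow> form \<Rightarrow> form" where
  "wedge \<alpha> \<beta> = (\<lambda>K. \<Sum>I\<in>Pow K. wedge_sign I (K - I) * \<alpha> I * \<beta> (K - I))"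

definition form_add :: "form \<Rightarrow> form \<Rightarrow> form" where
  "form_add \<alpha> \<beta> = (\<lambda>K. \<alpha> K + \<beta> K)"

definition form_diff :: "form \<Rightarrow> form \<Rightarrow> form" where
  "form_diff \<alpha> \<beta> = (\<lambda>K. \<alpha> K - \<beta> K)"

definition form_scale :: "real \<Rightarrow> form \<Rightarrow> form" where
  "form_scale c \<alpha> = (\<lambda>K. c * \<alpha> K)"

definition dx1 :: "nat \<Rightarrow> form" where
  "dx1 i = (\<lambda>K. if K = {i} then 1 else 0)"

fun dxl :: "nat list \<Rightarrow> form" where
  "dxl [] = (\<lambda>K. if K = {} then 1 else 0)"
| "dxl (i # is) = wedge (dx1 i) (dxl is)"

definition interior :: "(nat \<Rightarrow> real) \<Rightarrow> form \<Rightarrow> form" where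
  "interior v \<alpha> = (\<lambda>J. \<Sum>i\<in>dim8 - J. v i * (-1) ^ card {j\<in>J. j < i} * \<alpha> (insert i J))"

definition flat :: "(nat \<Rightarrow> real) \<Rightarrow> form" where
  "flat v = (\<lambda>K. \<Sum>i\<in>dim8. if K = {i} then v i else 0)"

definition g_o :: "(nat \<Rightarrow> real) \<Rightarrow> (nat \<Rightarrow> real) \<Rightarrow> real" where
  "g_o v w = (\<Sum>i\<in>dim8. v i * w i)"

definition norm_wedge_sq :: "(nat \<Rightarrow> real) \<Rightarrow> (nat \<Rightarrow> real) \<Rightarrow> real" where
  "norm_wedge_sq v w = g_o v v * g_o w w - (g_o v w)^2"

text \<open>The standard Spin(7) 4-form Phi_o (in the adapted coordinates at a point).\<close>
definition Phi_o :: form where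
  "Phi_o = (\<lambda>K.
      dxl [0,1,2,3] K - dxl [0,1,6,7] K - dxl [0,5,2,7] K - dxl [0,5,6,3] K
    + dxl [0,4,1,5] K + dxl [0,4,2,6] K + dxl [0,4,3,7] K + dxl [4,5,6,7] K
    - dxl [4,5,2,3] K - dxl [4,1,6,3] K - dxl [4,1,2,7] K + dxl [2,6,3,7] K
    + dxl [1,5,3,7] K + dxl [1,5,2,6] K)"

definition sigma7 :: "(nat \<Rightarrow> real) \<Rightarrow> (nat \<Rightarrow> real) \<Rightarrow> form" where
  "sigma7 v w = form_diff (wedge (flat v) (interior w Phi_o)) (wedge (flat w) (interior v Phi_o))"

end

theory Submission
  imports Defs
begin

(* In adapted coordinates the coefficients of \<sigma>\<^sub>7 are linear in seven quantities
   \<omega>\<^sub>1, ..., \<omega>\<^sub>7, the components of v\<flat> \<and> w\<flat> in \<Lambda>\<^sup>2\<^sub>7. The top coefficient of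
   (\<Phi>\<^sub>o + \<sigma>\<^sub>7) \<and> (\<Phi>\<^sub>o + \<sigma>\<^sub>7) comes out as 14 + 8 |\<omega>|\<^sup>2: the cross term \<Phi>\<^sub>o \<and> \<sigma>\<^sub>7
   vanishes, \<sigma>\<^sub>7 \<and> \<sigma>\<^sub>7 = 8 |\<omega>|\<^sup>2 vol and \<Phi>\<^sub>o \<and> \<Phi>\<^sub>o = 14 vol. Since v \<and> w is
   decomposable, the Pluecker relations give |\<omega>|\<^sup>2 = |v \<and> w|\<^sup>2, and
   14 + 8 |v \<and> w|\<^sup>2 = 14 (1 + 4/7 |v \<and> w|\<^sup>2). *)

lemma wedge_sign_eq_power_sum:
  assumes "finite I" "finite J"
  shows "wedge_sign I J = (-1) ^ (\<Sum>i\<in>I. card (J \<inter> {..<i}))"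
proof -
  have "{(i,j). i \<in> I \<and> j \<in> J \<and> j < i} = Sigma I (\<lambda>i. J \<inter> {..<i})" by auto
  then have "card {(i,j). i \<in> I \<and> j \<in> J \<and> j < i} = (\<Sum>i\<in>I. card (J \<inter> {..<i}))"
    using assms by (simp add: card_SigmaI)
  then show ?thesis unfolding wedge_sign_def by simp
qed

lemma finite_dim8 [simp]: "finite dim8"
  by (simp add: dim8_def)

lemma dim8_eq: "dim8 = {0,1,2,3,4,5,6,7}"
  by (auto simp: dim8_def)

lemma wedge_flat_apply:
  assumes "finite K"
  shows "wedge (flat v) \<beta> K = (\<Sum>i\<in>dim8 \<inter> K. v i * (-1) ^ card ((K - {i}) \<inter> {..<i}) * \<beta> (K - {i}))"
proof -
  have "wedge (flat v) \<beta> K = (\<Sum>I\<in>Pow K. \<Sum>i\<in>dim8. if I = {i} then wedge_sign {i} (K - {i}) * v i * \<beta> (K - {i}) else 0)"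
    unfolding wedge_def flat_def
    by (auto simp: sum_distrib_left sum_distrib_right intro!: sum.cong)
  also have "\<dots> = (\<Sum>i\<in>dim8. \<Sum>I\<in>Pow K. if I = {i} then wedge_sign {i} (K - {i}) * v i * \<beta> (K - {i}) else 0)"
    by (rule sum.swap)
  also have "\<dots> = (\<Sum>i\<in>dim8. if i \<in> K then wedge_sign {i} (K - {i}) * v i * \<beta> (K - {i}) else 0)"
    using assms by (intro sum.cong refl) (simp add: sum.delta)
  also have "\<dots> = (\<Sum>i\<in>dim8 \<inter> K. wedge_sign {i} (K - {i}) * v i * \<beta> (K - {i}))"
    by (simp add: sum.inter_restrict)
  also have "\<dots> = (\<Sum>i\<in>dim8 \<inter> K. v i * (-1) ^ card ((K - {i}) \<inter> {..<i}) * \<beta> (K - {i}))"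
    using assms by (intro sum.cong) (auto simp: wedge_sign_eq_power_sum)
  finally show ?thesis .
qed

lemma interior_apply:
  "interior v \<alpha> J = (\<Sum>i\<in>dim8 - J. v i * (-1) ^ card (J \<inter> {..<i}) * \<alpha> (insert i J))"
proof -
  have "{j \<in> J. j < i} = J \<inter> {..<i}" for i by auto
  then show ?thesis unfolding interior_def by simp
qed

lemma dx1_eq_flat:
  assumes "i < 8"
  shows "dx1 i = flat (\<lambda>j. if j = i then 1 else 0)"
proof
  fix K
  have "flat (\<lambda>j. if j = i then 1 else 0) K = (\<Sum>j\<in>dim8. if j = i then (if K = {i} then 1 else 0) else 0)"
    unfolding flat_def by (intro sum.cong) auto
  also have "\<dots> = (if K = {i} then 1 else 0)"
    using assms by (simp add: dim8_def)
  finally show "dx1 i K = flat (\<lambda>j. if j = i then 1 else 0) K"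
    by (simp add: dx1_def)
qed

lemma dxl_Cons_apply:
  assumes "i < 8" "finite K"
  shows "dxl (i # is) K = (if i \<in> K then (-1) ^ card ((K - {i}) \<inter> {..<i}) * dxl is (K - {i}) else 0)"
proof -
  have "dxl (i # is) K = (\<Sum>j\<in>dim8 \<inter> K. (if j = i then 1 else 0) * (-1) ^ card ((K - {j}) \<inter> {..<j}) * dxl is (K - {j}))"
    using assms by (simp add: dx1_eq_flat wedge_flat_apply)
  also have "\<dots> = (\<Sum>j\<in>dim8 \<inter> K. if j = i then (-1) ^ card ((K - {i}) \<inter> {..<i}) * dxl is (K - {i}) else 0)"
    by (intro sum.cong) auto
  also have "\<dots> = (if i \<in> K then (-1) ^ card ((K - {i}) \<inter> {..<i}) * dxl is (K - {i}) else 0)"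
    using assms by (simp add: dim8_def)
  finally show ?thesis .
qed

definition is_form :: "nat \<Rightarrow> form \<Rightarrow> bool" where
  "is_form n \<alpha> \<longleftrightarrow> (\<forall>I. \<alpha> I \<noteq> 0 \<longrightarrow> I \<subseteq> dim8 \<and> card I = n)"

lemma is_formI:
  "(\<And>I. \<not> (I \<subseteq> dim8 \<and> card I = n) \<Longrightarrow> \<alpha> I = 0) \<Longrightarrow> is_form n \<alpha>"
  unfolding is_form_def by blast

lemma is_formD:
  "is_form n \<alpha> \<Longrightarrow> \<not> (I \<subseteq> dim8 \<and> card I = n) \<Longrightarrow> \<alpha> I = 0"
  unfolding is_form_def by blast

lemma is_form_wedge:
  assumes \<alpha>: "is_form a \<alpha>" and \<beta>: "is_form b \<beta>"
  shows "is_form (a + b) (wedge \<alpha> \<beta>)"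
  unfolding is_form_def
proof (intro allI impI)
  fix K assume nonzero: "wedge \<alpha> \<beta> K \<noteq> 0"
  then have "finite K"
    by (metis finite_Pow_iff sum.infinite wedge_def)
  from nonzero obtain I where I: "I \<subseteq> K" "\<alpha> I \<noteq> 0" "\<beta> (K - I) \<noteq> 0"
    unfolding wedge_def by (metis (no_types, lifting) PowD mult_eq_0_iff sum.neutral)
  have "I \<subseteq> dim8" "card I = a" "K - I \<subseteq> dim8" "card (K - I) = b"
    using \<alpha> \<beta> I unfolding is_form_def by auto
  moreover have "card K = card I + card (K - I)"
    using \<open>finite K\<close> I(1) by (metis card_Diff_subset card_mono diff_add_inverse le_add_diff_inverse
        finite_subset)
  ultimately show "K \<subseteq> dim8 \<and> card K = a + b" by auto
qed

lemma is_form_dxl: "\<forall>i\<in>set l. i < 8 \<Longrightarrow> is_form (length l) (dxl l)"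
proof (induction l)
  case Nil
  then show ?case by (simp add: is_form_def)
next
  case (Cons i l)
  have "is_form 1 (dx1 i)"
    using Cons.prems by (intro is_formI) (auto simp: dx1_def dim8_def)
  then show ?case
    using Cons is_form_wedge[of 1 "dx1 i" "length l" "dxl l"] by simp
qed

lemma is_form_Phi_o: "is_form 4 Phi_o"
proof (rule is_formI)
  fix I assume "\<not> (I \<subseteq> dim8 \<and> card I = 4)"
  then have "dxl l I = 0" if "\<forall>i\<in>set l. i < 8" "length l = 4" for l
    using is_formD[OF is_form_dxl[OF that(1)]] that(2) by simp
  then show "Phi_o I = 0"
    unfolding Phi_o_def by (simp del: dxl.simps)
qed

lemma is_form_flat: "is_form 1 (flat v)"
proof (rule is_formI)
  fix I assume "\<not> (I \<subseteq> dim8 \<and> card I = 1)"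
  then show "flat v I = 0"
    unfolding flat_def by (intro sum.neutral) auto
qed

lemma is_form_interior:
  assumes "is_form (Suc n) \<alpha>"
  shows "is_form n (interior v \<alpha>)"
proof (rule is_formI)
  fix J assume J: "\<not> (J \<subseteq> dim8 \<and> card J = n)"
  have "\<alpha> (insert i J) = 0" if "i \<in> dim8 - J" for i
  proof (rule is_formD[OF assms])
    show "\<not> (insert i J \<subseteq> dim8 \<and> card (insert i J) = Suc n)"
      using J that finite_subset[OF _ finite_dim8] by (metis DiffD2 card_insert_disjoint
          finite_insert insert_subset nat.inject)
  qed
  then show "interior v \<alpha> J = 0"
    unfolding interior_def by (simp add: sum.neutral)
qed

lemma is_form_add: "is_form n \<alpha> \<Longrightarrow> is_form n \<beta> \<Longrightarrow> is_form n (form_add \<alpha> \<beta>)"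
  by (intro is_formI) (simp add: is_formD form_add_def)

lemma is_form_diff: "is_form n \<alpha> \<Longrightarrow> is_form n \<beta> \<Longrightarrow> is_form n (form_diff \<alpha> \<beta>)"
  by (intro is_formI) (simp add: is_formD form_diff_def)

lemma is_form_top_degree:
  assumes "is_form 8 \<alpha>" "K \<noteq> dim8"
  shows "\<alpha> K = 0"
proof (rule is_formD[OF assms(1)])
  show "\<not> (K \<subseteq> dim8 \<and> card K = 8)"
    using assms(2) card_subset_eq[OF finite_dim8] by (auto simp: dim8_def)
qed

abbreviation Phi_tilde :: "(nat \<Rightarrow> real) \<Rightarrow> (nat \<Rightarrow> real) \<Rightarrow> form" where
  "Phi_tilde v w \<equiv> form_add Phi_o (sigma7 v w)"

lemma is_form_Phi_tilde: "is_form 4 (Phi_tilde v w)"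
proof -
  have "is_form 3 (interior u Phi_o)" for u
    using is_form_interior[of 3] is_form_Phi_o by simp
  then have "is_form (1 + 3) (wedge (flat u) (interior u' Phi_o))" for u u'
    using is_form_wedge is_form_flat by blast
  then show ?thesis
    unfolding sigma7_def using is_form_add is_form_diff is_form_Phi_o by simp
qed

(* Coefficient tables are indexed by increasing lists of indices, since set literals
   have no normal form for the simplifier. *)

definition form_coeff :: "form \<Rightarrow> nat list \<Rightarrow> real" where
  "form_coeff \<alpha> l = \<alpha> (set l)"

definition sorted_indices :: "nat set \<Rightarrow> nat list" where
  "sorted_indices I = filter (\<lambda>i. i \<in> I) [0,1,2,3,4,5,6,7]"

lemma is_form_apply:
  assumes "is_form n \<alpha>"
  shows "\<alpha> I = (if I \<subseteq> dim8 \<and> card I = n then form_coeff \<alpha> (sorted_indices I) else 0)"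
proof -
  have "I \<subseteq> dim8 \<Longrightarrow> set (sorted_indices I) = I"
    unfolding sorted_indices_def dim8_eq by auto
  then show ?thesis
    using is_formD[OF assms] unfolding form_coeff_def by auto
qed

lemmas set_literal_simps = Int_insert_left insert_Diff_if

lemma Phi_o_coeffs:
  "form_coeff Phi_o [0,Suc 0,2,3] = 1"
  "form_coeff Phi_o [0,Suc 0,2,4] = 0"
  "form_coeff Phi_o [0,Suc 0,2,5] = 0"
  "form_coeff Phi_o [0,Suc 0,2,6] = 0"
  "form_coeff Phi_o [0,Suc 0,2,7] = 0"
  "form_coeff Phi_o [0,Suc 0,3,4] = 0"
  "form_coeff Phi_o [0,Suc 0,3,5] = 0"
  "form_coeff Phi_o [0,Suc 0,3,6] = 0"
  "form_coeff Phi_o [0,Suc 0,3,7] = 0"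
  "form_coeff Phi_o [0,Suc 0,4,5] = (- 1)"
  "form_coeff Phi_o [0,Suc 0,4,6] = 0"
  "form_coeff Phi_o [0,Suc 0,4,7] = 0"
  "form_coeff Phi_o [0,Suc 0,5,6] = 0"
  "form_coeff Phi_o [0,Suc 0,5,7] = 0"
  "form_coeff Phi_o [0,Suc 0,6,7] = (- 1)"
  "form_coeff Phi_o [0,2,3,4] = 0"
  "form_coeff Phi_o [0,2,3,5] = 0"
  "form_coeff Phi_o [0,2,3,6] = 0"
  "form_coeff Phi_o [0,2,3,7] = 0"
  "form_coeff Phi_o [0,2,4,5] = 0"
  "form_coeff Phi_o [0,2,4,6] = (- 1)"
  "form_coeff Phi_o [0,2,4,7] = 0"
  "form_coeff Phi_o [0,2,5,6] = 0"
  "form_coeff Phi_o [0,2,5,7] = 1"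
  "form_coeff Phi_o [0,2,6,7] = 0"
  "form_coeff Phi_o [0,3,4,5] = 0"
  "form_coeff Phi_o [0,3,4,6] = 0"
  "form_coeff Phi_o [0,3,4,7] = (- 1)"
  "form_coeff Phi_o [0,3,5,6] = (- 1)"
  "form_coeff Phi_o [0,3,5,7] = 0"
  "form_coeff Phi_o [0,3,6,7] = 0"
  "form_coeff Phi_o [0,4,5,6] = 0"
  "form_coeff Phi_o [0,4,5,7] = 0"
  "form_coeff Phi_o [0,4,6,7] = 0"
  "form_coeff Phi_o [0,5,6,7] = 0"
  "form_coeff Phi_o [Suc 0,2,3,4] = 0"
  "form_coeff Phi_o [Suc 0,2,3,5] = 0"
  "form_coeff Phi_o [Suc 0,2,3,6] = 0"
  "form_coeff Phi_o [Suc 0,2,3,7] = 0"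
  "form_coeff Phi_o [Suc 0,2,4,5] = 0"
  "form_coeff Phi_o [Suc 0,2,4,6] = 0"
  "form_coeff Phi_o [Suc 0,2,4,7] = (- 1)"
  "form_coeff Phi_o [Suc 0,2,5,6] = (- 1)"
  "form_coeff Phi_o [Suc 0,2,5,7] = 0"
  "form_coeff Phi_o [Suc 0,2,6,7] = 0"
  "form_coeff Phi_o [Suc 0,3,4,5] = 0"
  "form_coeff Phi_o [Suc 0,3,4,6] = 1"
  "form_coeff Phi_o [Suc 0,3,4,7] = 0"
  "form_coeff Phi_o [Suc 0,3,5,6] = 0"
  "form_coeff Phi_o [Suc 0,3,5,7] = (- 1)"
  "form_coeff Phi_o [Suc 0,3,6,7] = 0"
  "form_coeff Phi_o [Suc 0,4,5,6] = 0"
  "form_coeff Phi_o [Suc 0,4,5,7] = 0"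
  "form_coeff Phi_o [Suc 0,4,6,7] = 0"
  "form_coeff Phi_o [Suc 0,5,6,7] = 0"
  "form_coeff Phi_o [2,3,4,5] = (- 1)"
  "form_coeff Phi_o [2,3,4,6] = 0"
  "form_coeff Phi_o [2,3,4,7] = 0"
  "form_coeff Phi_o [2,3,5,6] = 0"
  "form_coeff Phi_o [2,3,5,7] = 0"
  "form_coeff Phi_o [2,3,6,7] = (- 1)"
  "form_coeff Phi_o [2,4,5,6] = 0"
  "form_coeff Phi_o [2,4,5,7] = 0"
  "form_coeff Phi_o [2,4,6,7] = 0"
  "form_coeff Phi_o [2,5,6,7] = 0"
  "form_coeff Phi_o [3,4,5,6] = 0"
  "form_coeff Phi_o [3,4,5,7] = 0"
  "form_coeff Phi_o [3,4,6,7] = 0"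
  "form_coeff Phi_o [3,5,6,7] = 0"
  "form_coeff Phi_o [4,5,6,7] = 1"
  unfolding form_coeff_def Phi_o_def by (simp_all del: dxl.simps(2) add: dxl_Cons_apply set_literal_simps)

definition bivector_coeff :: "(nat \<Rightarrow> real) \<Rightarrow> (nat \<Rightarrow> real) \<Rightarrow> nat \<Rightarrow> nat \<Rightarrow> real" where
  "bivector_coeff v w i j = v i * w j - v j * w i"

(* omega v w j pairs v\<flat> \<and> w\<flat> with dx\<^sup>0 \<and> dx\<^sup>j + e\<^sub>j \<lrcorner> e\<^sub>0 \<lrcorner> Phi_o; these seven
   2-forms span \<Lambda>\<^sup>2\<^sub>7. Only j = 1, ..., 7 is meaningful. *)

definition omega :: "(nat \<Rightarrow> real) \<Rightarrow> (nat \<Rightarrow> real) \<Rightarrow> nat \<Rightarrow> real" where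
  "omega v w j = (let p = bivector_coeff v w in
     if j = 1 then p 0 1 + p 2 3 - p 4 5 - p 6 7
     else if j = 2 then p 0 2 - p 1 3 - p 4 6 + p 5 7
     else if j = 3 then p 0 3 + p 1 2 - p 4 7 - p 5 6
     else if j = 4 then p 0 4 + p 1 5 + p 2 6 + p 3 7
     else if j = 5 then p 0 5 - p 1 4 - p 2 7 + p 3 6
     else if j = 6 then p 0 6 + p 1 7 - p 2 4 - p 3 5
     else if j = 7 then p 0 7 - p 1 6 + p 2 5 - p 3 4
     else 0)"

(* As a congruence rule this keeps the simplifier out of the summand until the index set
   has been computed. *)

lemma sum_cong_set: "A = B \<Longrightarrow> sum f A = sum f B"
  by simp

lemma Phi_tilde_coeffs:
  "form_coeff (Phi_tilde v w) [0,Suc 0,2,3] = 1"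
  "form_coeff (Phi_tilde v w) [0,Suc 0,2,4] = omega v w 7"
  "form_coeff (Phi_tilde v w) [0,Suc 0,2,5] = omega v w 6"
  "form_coeff (Phi_tilde v w) [0,Suc 0,2,6] = - omega v w 5"
  "form_coeff (Phi_tilde v w) [0,Suc 0,2,7] = - omega v w 4"
  "form_coeff (Phi_tilde v w) [0,Suc 0,3,4] = - omega v w 6"
  "form_coeff (Phi_tilde v w) [0,Suc 0,3,5] = omega v w 7"
  "form_coeff (Phi_tilde v w) [0,Suc 0,3,6] = omega v w 4"
  "form_coeff (Phi_tilde v w) [0,Suc 0,3,7] = - omega v w 5"
  "form_coeff (Phi_tilde v w) [0,Suc 0,4,5] = - 1"
  "form_coeff (Phi_tilde v w) [0,Suc 0,4,6] = - omega v w 3"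
  "form_coeff (Phi_tilde v w) [0,Suc 0,4,7] = omega v w 2"
  "form_coeff (Phi_tilde v w) [0,Suc 0,5,6] = omega v w 2"
  "form_coeff (Phi_tilde v w) [0,Suc 0,5,7] = omega v w 3"
  "form_coeff (Phi_tilde v w) [0,Suc 0,6,7] = - 1"
  "form_coeff (Phi_tilde v w) [0,2,3,4] = omega v w 5"
  "form_coeff (Phi_tilde v w) [0,2,3,5] = - omega v w 4"
  "form_coeff (Phi_tilde v w) [0,2,3,6] = omega v w 7"
  "form_coeff (Phi_tilde v w) [0,2,3,7] = - omega v w 6"
  "form_coeff (Phi_tilde v w) [0,2,4,5] = omega v w 3"
  "form_coeff (Phi_tilde v w) [0,2,4,6] = - 1"
  "form_coeff (Phi_tilde v w) [0,2,4,7] = - omega v w 1"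
  "form_coeff (Phi_tilde v w) [0,2,5,6] = - omega v w 1"
  "form_coeff (Phi_tilde v w) [0,2,5,7] = 1"
  "form_coeff (Phi_tilde v w) [0,2,6,7] = omega v w 3"
  "form_coeff (Phi_tilde v w) [0,3,4,5] = - omega v w 2"
  "form_coeff (Phi_tilde v w) [0,3,4,6] = omega v w 1"
  "form_coeff (Phi_tilde v w) [0,3,4,7] = - 1"
  "form_coeff (Phi_tilde v w) [0,3,5,6] = - 1"
  "form_coeff (Phi_tilde v w) [0,3,5,7] = - omega v w 1"
  "form_coeff (Phi_tilde v w) [0,3,6,7] = - omega v w 2"
  "form_coeff (Phi_tilde v w) [0,4,5,6] = - omega v w 7"
  "form_coeff (Phi_tilde v w) [0,4,5,7] = omega v w 6"
  "form_coeff (Phi_tilde v w) [0,4,6,7] = - omega v w 5"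
  "form_coeff (Phi_tilde v w) [0,5,6,7] = omega v w 4"
  "form_coeff (Phi_tilde v w) [Suc 0,2,3,4] = omega v w 4"
  "form_coeff (Phi_tilde v w) [Suc 0,2,3,5] = omega v w 5"
  "form_coeff (Phi_tilde v w) [Suc 0,2,3,6] = omega v w 6"
  "form_coeff (Phi_tilde v w) [Suc 0,2,3,7] = omega v w 7"
  "form_coeff (Phi_tilde v w) [Suc 0,2,4,5] = - omega v w 2"
  "form_coeff (Phi_tilde v w) [Suc 0,2,4,6] = omega v w 1"
  "form_coeff (Phi_tilde v w) [Suc 0,2,4,7] = - 1"
  "form_coeff (Phi_tilde v w) [Suc 0,2,5,6] = - 1"
  "form_coeff (Phi_tilde v w) [Suc 0,2,5,7] = - omega v w 1"
  "form_coeff (Phi_tilde v w) [Suc 0,2,6,7] = - omega v w 2"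
  "form_coeff (Phi_tilde v w) [Suc 0,3,4,5] = - omega v w 3"
  "form_coeff (Phi_tilde v w) [Suc 0,3,4,6] = 1"
  "form_coeff (Phi_tilde v w) [Suc 0,3,4,7] = omega v w 1"
  "form_coeff (Phi_tilde v w) [Suc 0,3,5,6] = omega v w 1"
  "form_coeff (Phi_tilde v w) [Suc 0,3,5,7] = - 1"
  "form_coeff (Phi_tilde v w) [Suc 0,3,6,7] = - omega v w 3"
  "form_coeff (Phi_tilde v w) [Suc 0,4,5,6] = - omega v w 6"
  "form_coeff (Phi_tilde v w) [Suc 0,4,5,7] = - omega v w 7"
  "form_coeff (Phi_tilde v w) [Suc 0,4,6,7] = - omega v w 4"
  "form_coeff (Phi_tilde v w) [Suc 0,5,6,7] = - omega v w 5"
  "form_coeff (Phi_tilde v w) [2,3,4,5] = - 1"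
  "form_coeff (Phi_tilde v w) [2,3,4,6] = - omega v w 3"
  "form_coeff (Phi_tilde v w) [2,3,4,7] = omega v w 2"
  "form_coeff (Phi_tilde v w) [2,3,5,6] = omega v w 2"
  "form_coeff (Phi_tilde v w) [2,3,5,7] = omega v w 3"
  "form_coeff (Phi_tilde v w) [2,3,6,7] = - 1"
  "form_coeff (Phi_tilde v w) [2,4,5,6] = omega v w 5"
  "form_coeff (Phi_tilde v w) [2,4,5,7] = omega v w 4"
  "form_coeff (Phi_tilde v w) [2,4,6,7] = - omega v w 7"
  "form_coeff (Phi_tilde v w) [2,5,6,7] = - omega v w 6"
  "form_coeff (Phi_tilde v w) [3,4,5,6] = - omega v w 4"
  "form_coeff (Phi_tilde v w) [3,4,5,7] = omega v w 5"
  "form_coeff (Phi_tilde v w) [3,4,6,7] = omega v w 6"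
  "form_coeff (Phi_tilde v w) [3,5,6,7] = - omega v w 7"
  "form_coeff (Phi_tilde v w) [4,5,6,7] = 1"
  unfolding form_coeff_def
  by (simp_all add: form_add_def sigma7_def form_diff_def wedge_flat_apply interior_apply
      dim8_eq is_form_apply[OF is_form_Phi_o] Phi_o_coeffs set_literal_simps sorted_indices_def
      omega_def bivector_coeff_def algebra_simps cong: sum_cong_set)

lemma sum_Pow_insert:
  assumes "a \<notin> A" "finite A"
  shows "sum f (Pow (insert a A)) = sum f (Pow A) + sum (\<lambda>I. f (insert a I)) (Pow A)"
proof -
  have "inj_on (insert a) (Pow A)"
    using assms(1) unfolding inj_on_def by (metis PowD insert_ident subsetD)
  moreover have "Pow A \<inter> insert a ` Pow A = {}"
    using assms(1) by auto
  ultimately show ?thesis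
    using assms(2) by (simp add: Pow_insert sum.union_disjoint sum.reindex)
qed

lemma atLeastAtMost_1_7: "{1..7::nat} = {1,2,3,4,5,6,7}"
  by auto

lemma wedge_Phi_tilde_top:
  "wedge (Phi_tilde v w) (Phi_tilde v w) dim8 = 14 + 8 * (\<Sum>j=1..7. (omega v w j)\<^sup>2)"
proof -
  have "wedge (Phi_tilde v w) (Phi_tilde v w) dim8 =
    (\<Sum>I\<in>Pow dim8. wedge_sign I (dim8 - I)
       * (if I \<subseteq> dim8 \<and> card I = 4 then form_coeff (Phi_tilde v w) (sorted_indices I) else 0)
       * (if dim8 - I \<subseteq> dim8 \<and> card (dim8 - I) = 4
          then form_coeff (Phi_tilde v w) (sorted_indices (dim8 - I)) else 0))"
    unfolding wedge_def by (simp only: is_form_apply[OF is_form_Phi_tilde])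
  also have "\<dots> = 14 + 8 * (\<Sum>j=1..7. (omega v w j)\<^sup>2)"
    unfolding dim8_eq atLeastAtMost_1_7
    by (simp add: sum_Pow_insert wedge_sign_eq_power_sum Phi_tilde_coeffs sorted_indices_def
        set_literal_simps cong: sum_cong_set) algebra
  finally show ?thesis .
qed

lemma wedge_Phi_o_top: "wedge Phi_o Phi_o dim8 = 14"
proof -
  have "sigma7 (\<lambda>_. 0) (\<lambda>_. 0) = (\<lambda>_. 0)"
    by (simp add: sigma7_def form_diff_def flat_def wedge_def fun_eq_iff)
  then have "Phi_tilde (\<lambda>_. 0) (\<lambda>_. 0) = Phi_o"
    by (simp add: form_add_def)
  then show ?thesis
    using wedge_Phi_tilde_top[of "\<lambda>_. 0" "\<lambda>_. 0"]
    unfolding atLeastAtMost_1_7 by (simp add: omega_def bivector_coeff_def)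
qed

(* The cross terms cancel by the Pluecker relations of the decomposable bivector
   v \<and> w, leaving Lagrange's identity. *)

lemma sum_omega_sq_eq_norm_wedge_sq: "(\<Sum>j=1..7. (omega v w j)\<^sup>2) = norm_wedge_sq v w"
  unfolding norm_wedge_sq_def g_o_def dim8_eq atLeastAtMost_1_7
  by (simp add: omega_def bivector_coeff_def) algebra

theorem mainTheorem18:
  fixes v w :: "nat \<Rightarrow> real"
  shows "wedge (form_add Phi_o (sigma7 v w)) (form_add Phi_o (sigma7 v w))
         = form_scale (1 + 4/7 * norm_wedge_sq v w) (wedge Phi_o Phi_o)"
proof
  fix K
  show "wedge (Phi_tilde v w) (Phi_tilde v w) K = form_scale (1 + 4/7 * norm_wedge_sq v w) (wedge Phi_o Phi_o) K"
  proof (cases "K = dim8")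
    case True
    then show ?thesis
      using wedge_Phi_tilde_top[of v w] wedge_Phi_o_top sum_omega_sq_eq_norm_wedge_sq[of v w]
      by (simp add: form_scale_def)
  next
    case False
    have "is_form 8 (wedge (Phi_tilde v w) (Phi_tilde v w))" "is_form 8 (wedge Phi_o Phi_o)"
      using is_form_wedge[of 4 _ 4] is_form_Phi_tilde is_form_Phi_o by simp_all
    then show ?thesis
      using False by (simp add: form_scale_def is_form_top_degree)
  qed
qed

end
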